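(* Let $n\ge2$ and $k\ge1$ be integers, and let $c(n-1,k)$ be the number of Young diagrams fitting in the staircase shape $(n-1,n-2,\dots,1)$ that have exactly $k$ corners $(i,j)$ satisfying $i+j<n$. Then $$c(n-1,k)=\sum_{i=1}^{n-1-k}\frac{i}{n-i}\binom{n-i}{k}\binom{n-1}{k+i}.$$ Furthermore, there are exactly $2^{n-1}$ Young diagrams fitting in $(n-1,n-2,\dots,1)$ that have no corner $(i,j)$ with $i+j<n$ (i.e. all of whose corners lie on the diagonal $i+j=n$; the empty diagram is included).
   Context: Young diagrams are drawn in English notation: the diagram of a partition $\lambda=(\lambda_1\ge\lambda_2\ge\dots)$ is the set of cells $(i,j)$ with $1\le j\le\lambda_i$, row $i$ counted from the top and column $j$ from the left. It fits in $(n-1,n-2,\dots,1)$ if $\lambda_i\le n-i$ for all $i$. A corner of the diagram is a cell $(i,j)$ of it such that neither $(i+1,j)$ nor $(i,j+1)$ belongs to the diagram. *)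

theory Defs
  imports Complex_Main
begin

text \<open>A Young diagram (English notation) is a finite set of cells (i,j), with
  i the row (from 1, top) and j the column (from 1, left), closed under moving
  up and to the left.\<close>
definition young_diagram :: "(nat \<times> nat) set \<Rightarrow> bool" where
  "young_diagram D \<longleftrightarrow> finite D \<and>
     (\<forall>(i,j)\<in>D. 1 \<le> i \<and> 1 \<le> j) \<and>
     (\<forall>(i,j)\<in>D. \<forall>i' j'. 1 \<le> i' \<and> i' \<le> i \<and> 1 \<le> j' \<and> j' \<le> j \<longrightarrow> (i',j') \<in> D)"

text \<open>Fits in the staircase (n-1, n-2, ..., 1): lambda_i <= n - i, i.e. every cell has i + j <= n.\<close>
definition fits_staircase :: "nat \<Rightarrow> (nat \<times> nat) set \<Rightarrow> bool" where
  "fits_staircase n D \<longleftrightarrow> (\<forall>(i,j)\<in>D. i + j \<le> n)"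

definition corners :: "(nat \<times> nat) set \<Rightarrow> (nat \<times> nat) set" where
  "corners D = {(i,j) \<in> D. (i+1,j) \<notin> D \<and> (i,j+1) \<notin> D}"

definition inner_corners :: "nat \<Rightarrow> (nat \<times> nat) set \<Rightarrow> (nat \<times> nat) set" where
  "inner_corners n D = {(i,j) \<in> corners D. i + j < n}"

definition c_count :: "nat \<Rightarrow> nat \<Rightarrow> nat" where
  "c_count n k = card {D. young_diagram D \<and> fits_staircase n D \<and> card (inner_corners n D) = k}"

end

theory Submission
  imports Defs
begin

(*
  Let a(n, l, k) count the diagrams in the staircase of size n whose first row has length
  at most l and which have k inner corners. Deleting the first row of a diagram whose first row
  has length exactly l gives a diagram in the staircase of size n - 1 with first row at most l;
  the inner corners move up by one row, and the cell (1, l) is an extra inner corner iff the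
  second row is shorter than l and l + 1 < n. This yields a recursion for a(n, l, k) in n and l,
  and Pascal's rule shows that the closed form
  sum over j of [C(n-2-j, k) C(l, j+k) - C(n-2-j, k-1) C(l, j+k+1)]
  satisfies the same recursion. At l = n - 1 its summands are the terms of the stated sum when
  k >= 1, and the binomial coefficients C(n-1, j) when k = 0. *)

lemma young_diagram_finite: "young_diagram D \<Longrightarrow> finite D"
  by (simp add: young_diagram_def)

lemma young_diagram_cell_pos: "young_diagram D \<Longrightarrow> (i, j) \<in> D \<Longrightarrow> 1 \<le> i \<and> 1 \<le> j"
  unfolding young_diagram_def by blast

lemma young_diagram_closed:
  "young_diagram D \<Longrightarrow> (i, j) \<in> D \<Longrightarrow> 1 \<le> i' \<Longrightarrow> i' \<le> i \<Longrightarrow> 1 \<le> j' \<Longrightarrow> j' \<le> j \<Longrightarrow> (i', j') \<in> D"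
  unfolding young_diagram_def by blast

lemma young_diagram_first_row:
  assumes "young_diagram D" "(1, Suc l) \<notin> D" "(i, j) \<in> D"
  shows "j \<le> l"
proof (rule ccontr)
  assume "\<not> j \<le> l"
  then have "(1, Suc l) \<in> D"
    using young_diagram_closed[OF assms(1,3), of 1 "Suc l"] young_diagram_cell_pos[OF assms(1,3)] by simp
  with assms(2) show False ..
qed

lemma young_diagram_eq_empty: "young_diagram D \<Longrightarrow> (1, 1) \<notin> D \<Longrightarrow> D = {}"
  using young_diagram_closed[of D _ _ 1 1] young_diagram_cell_pos[of D] by fastforce

lemma finite_fits_staircase: "finite (Collect (fits_staircase n))"
proof (rule finite_subset)
  show "Collect (fits_staircase n) \<subseteq> Pow ({..n} \<times> {..n})"
    unfolding fits_staircase_def by fastforce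
qed simp

lemma fits_staircase_first_row: "fits_staircase n D \<Longrightarrow> (1, Suc (n - 1)) \<notin> D"
  by (auto simp: fits_staircase_def)

lemma finite_inner_corners: "young_diagram D \<Longrightarrow> finite (inner_corners n D)"
  by (rule finite_subset[of _ D]) (auto simp: inner_corners_def corners_def young_diagram_finite)

(* The integer k lets the recursion below pass to k - 1 without truncation; the set is empty
   for k < 0. *)
definition row_le_diagrams :: "nat \<Rightarrow> nat \<Rightarrow> int \<Rightarrow> (nat \<times> nat) set set" where
  "row_le_diagrams n l k = {D. young_diagram D \<and> fits_staircase n D \<and> (1, Suc l) \<notin> D \<and>
     int (card (inner_corners n D)) = k}"

definition row_eq_diagrams :: "nat \<Rightarrow> nat \<Rightarrow> int \<Rightarrow> (nat \<times> nat) set set" where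
  "row_eq_diagrams n l k = {D \<in> row_le_diagrams n l k. (1, l) \<in> D}"

lemma finite_row_le_diagrams: "finite (row_le_diagrams n l k)"
  by (rule finite_subset[OF _ finite_fits_staircase]) (auto simp: row_le_diagrams_def)

lemma row_le_diagrams_0: "row_le_diagrams n 0 k = (if k = 0 then {{}} else {})"
proof -
  have "young_diagram {}" "fits_staircase n {}" "inner_corners n {} = {}"
    by (simp_all add: young_diagram_def fits_staircase_def inner_corners_def corners_def)
  then have "D \<in> row_le_diagrams n 0 k \<longleftrightarrow> D = {} \<and> k = 0" for D
    using young_diagram_eq_empty[of D] by (auto simp: row_le_diagrams_def)
  then show ?thesis
    by auto
qed

lemma row_eq_diagrams_empty: "n \<le> l \<Longrightarrow> row_eq_diagrams n l k = {}"
  by (fastforce simp: row_eq_diagrams_def row_le_diagrams_def fits_staircase_def)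

lemma card_row_le_diagrams_Suc:
  "card (row_le_diagrams n (Suc l) k) = card (row_le_diagrams n l k) + card (row_eq_diagrams n (Suc l) k)"
proof -
  have "row_le_diagrams n (Suc l) k = row_le_diagrams n l k \<union> row_eq_diagrams n (Suc l) k"
    by (auto simp: row_le_diagrams_def row_eq_diagrams_def
        dest: young_diagram_closed[of _ 1 "Suc (Suc l)" 1 "Suc l"])
  moreover have "row_le_diagrams n l k \<inter> row_eq_diagrams n (Suc l) k = {}"
    by (auto simp: row_le_diagrams_def row_eq_diagrams_def)
  moreover have "finite (row_eq_diagrams n (Suc l) k)"
    by (simp add: row_eq_diagrams_def finite_row_le_diagrams)
  ultimately show ?thesis
    by (simp add: card_Un_disjoint finite_row_le_diagrams)
qed

definition add_row :: "nat \<Rightarrow> (nat \<times> nat) set \<Rightarrow> (nat \<times> nat) set" where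
  "add_row l D = {1} \<times> {1..l} \<union> apfst Suc ` D"

definition del_row :: "(nat \<times> nat) set \<Rightarrow> (nat \<times> nat) set" where
  "del_row D = {(i, j). 1 \<le> i \<and> (Suc i, j) \<in> D}"

lemma Pair_Suc_mem_apfst_Suc_image [simp]: "(Suc i, j) \<in> apfst Suc ` X \<longleftrightarrow> (i, j) \<in> X"
  by force

lemma mem_add_row:
  "(i, j) \<in> add_row l D \<longleftrightarrow> (i = 1 \<and> 1 \<le> j \<and> j \<le> l) \<or> (1 \<le> i \<and> (i - 1, j) \<in> D)"
  by (cases i) (force simp: add_row_def apfst_def map_prod_def)+

lemma young_diagram_add_row:
  assumes "young_diagram D" "(1, Suc l) \<notin> D"
  shows "young_diagram (add_row l D)"
proof -
  have "finite (add_row l D)"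
    using young_diagram_finite[OF assms(1)] by (simp add: add_row_def)
  moreover have "1 \<le> i \<and> 1 \<le> j" if "(i, j) \<in> add_row l D" for i j
    using that young_diagram_cell_pos[OF assms(1)] by (auto simp: mem_add_row)
  moreover have "(i', j') \<in> add_row l D"
    if ij: "(i, j) \<in> add_row l D" and le: "1 \<le> i'" "i' \<le> i" "1 \<le> j'" "j' \<le> j" for i j i' j'
  proof -
    consider "i = 1" "j \<le> l" | "(i - 1, j) \<in> D" "1 \<le> i"
      using ij by (auto simp: mem_add_row)
    then show ?thesis
    proof cases
      case 2
      then have "j \<le> l" using young_diagram_first_row[OF assms] by blast
      show ?thesis
      proof (cases "i' = 1")
        case False
        then have "(i' - 1, j') \<in> D"
          using young_diagram_closed[OF assms(1) 2(1), of "i' - 1" j'] le by auto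
        then show ?thesis using le by (simp add: mem_add_row)
      qed (use le \<open>j \<le> l\<close> in \<open>simp add: mem_add_row\<close>)
    qed (use le in \<open>auto simp: mem_add_row\<close>)
  qed
  ultimately show ?thesis
    unfolding young_diagram_def by blast
qed

lemma fits_staircase_add_row:
  assumes "young_diagram D" "fits_staircase (n - 1) D" "l < n"
  shows "fits_staircase n (add_row l D)"
  using assms young_diagram_cell_pos[OF assms(1)]
  by (fastforce simp: fits_staircase_def mem_add_row)

lemma del_row_add_row: "young_diagram D \<Longrightarrow> del_row (add_row l D) = D"
  using young_diagram_cell_pos[of D] by (force simp: del_row_def mem_add_row)

lemma add_row_del_row:
  assumes "young_diagram D" "(1, l) \<in> D" "(1, Suc l) \<notin> D"
  shows "add_row l (del_row D) = D"
proof (intro set_eqI iffI; clarify)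
  fix i j assume "(i, j) \<in> add_row l (del_row D)"
  then consider "i = 1" "1 \<le> j" "j \<le> l" | "(i, j) \<in> D"
    by (auto simp: mem_add_row del_row_def)
  then show "(i, j) \<in> D"
    by cases (use young_diagram_closed[OF assms(1,2)] in auto)
next
  fix i j assume "(i, j) \<in> D"
  then show "(i, j) \<in> add_row l (del_row D)"
    using young_diagram_cell_pos[OF assms(1)] young_diagram_first_row[OF assms(1,3)]
    by (cases i) (auto simp: mem_add_row del_row_def)
qed

lemma young_diagram_del_row:
  assumes "young_diagram D"
  shows "young_diagram (del_row D)"
proof -
  have "del_row D \<subseteq> apfst (\<lambda>i. i - 1) ` D"
    by (force simp: del_row_def)
  then have "finite (del_row D)"
    using young_diagram_finite[OF assms] finite_surj by blast
  moreover have "1 \<le> i \<and> 1 \<le> j" if "(i, j) \<in> del_row D" for i j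
    using that young_diagram_cell_pos[OF assms] by (auto simp: del_row_def)
  moreover have "(i', j') \<in> del_row D"
    if "(i, j) \<in> del_row D" "1 \<le> i'" "i' \<le> i" "1 \<le> j'" "j' \<le> j" for i j i' j'
    using that young_diagram_closed[OF assms, of "Suc i" j "Suc i'" j'] by (simp add: del_row_def)
  ultimately show ?thesis
    unfolding young_diagram_def by blast
qed

lemma fits_staircase_del_row: "fits_staircase n D \<Longrightarrow> fits_staircase (n - 1) (del_row D)"
  by (fastforce simp: fits_staircase_def del_row_def)

lemma inner_corners_add_row:
  assumes "young_diagram D" "(1, Suc l) \<notin> D" "1 \<le> l" "1 \<le> n"
  shows "inner_corners n (add_row l D) =
    (if (1, l) \<notin> D \<and> Suc l < n then {(1, l)} else {}) \<union> apfst Suc ` inner_corners (n - 1) D"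
proof (intro set_eqI, clarify)
  fix a b
  have pos: "(0, b) \<notin> D" "(a, 0) \<notin> D" for a b
    using young_diagram_cell_pos[OF assms(1)] by fastforce+
  consider "a = 0" | "a = 1" | c where "a = Suc c" "1 \<le> c"
    by (metis One_nat_def less_one not0_implies_Suc not_le)
  then show "(a, b) \<in> inner_corners n (add_row l D) \<longleftrightarrow>
    (a, b) \<in> (if (1, l) \<notin> D \<and> Suc l < n then {(1, l)} else {}) \<union> apfst Suc ` inner_corners (n - 1) D"
  proof cases
    case 1
    then show ?thesis by (auto simp: inner_corners_def corners_def mem_add_row)
  next
    case 2
    have "(1, b) \<in> corners (add_row l D) \<longleftrightarrow> b = l \<and> (1, l) \<notin> D"
      using assms(3) pos by (cases "b = l") (auto simp: corners_def mem_add_row)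
    then show ?thesis
      using 2 pos by (auto simp: inner_corners_def corners_def)
  next
    case 3
    then have "(a, b) \<in> corners (add_row l D) \<longleftrightarrow> (c, b) \<in> corners D"
      by (auto simp: corners_def mem_add_row)
    moreover have "a + b < n \<longleftrightarrow> c + b < n - 1"
      using 3 assms(4) by auto
    ultimately show ?thesis
      using 3 by (auto simp: inner_corners_def)
  qed
qed

lemma card_inner_corners_add_row:
  assumes "young_diagram D" "(1, Suc l) \<notin> D" "1 \<le> l" "1 \<le> n"
  shows "card (inner_corners n (add_row l D)) =
    card (inner_corners (n - 1) D) + of_bool ((1, l) \<notin> D \<and> Suc l < n)"
proof -
  have "(1, l) \<notin> apfst Suc ` inner_corners (n - 1) D"
    using young_diagram_cell_pos[OF assms(1), of 0 l] by (auto simp: inner_corners_def corners_def)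
  moreover have "card (apfst Suc ` inner_corners (n - 1) D) = card (inner_corners (n - 1) D)"
    by (rule card_image) (simp add: inj_on_subset[OF inj_apfst[THEN iffD2]])
  ultimately show ?thesis
    unfolding inner_corners_add_row[OF assms]
    using finite_inner_corners[OF assms(1)] by auto
qed

lemma row_eq_diagrams_eq_image_add_row:
  assumes "Suc l < n"
  shows "row_eq_diagrams n (Suc l) k = add_row (Suc l) `
    {D. young_diagram D \<and> fits_staircase (n - 1) D \<and> (1, Suc (Suc l)) \<notin> D \<and>
        int (card (inner_corners (n - 1) D)) + of_bool ((1, Suc l) \<notin> D \<and> Suc (Suc l) < n) = k}"
    (is "_ = add_row (Suc l) ` ?S")
proof (intro equalityI subsetI)
  have inner: "card (inner_corners n (add_row (Suc l) D)) =
      card (inner_corners (n - 1) D) + of_bool ((1, Suc l) \<notin> D \<and> Suc (Suc l) < n)"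
    if "young_diagram D" "(1, Suc (Suc l)) \<notin> D" for D
    using that assms card_inner_corners_add_row[of D "Suc l" n] by simp
  {
    fix D assume D: "D \<in> row_eq_diagrams n (Suc l) k"
    then have yd: "young_diagram D" and row: "(1, Suc l) \<in> D" "(1, Suc (Suc l)) \<notin> D"
      by (auto simp: row_eq_diagrams_def row_le_diagrams_def)
    have D_eq: "add_row (Suc l) (del_row D) = D"
      using add_row_del_row[OF yd row] .
    have "(1, Suc (Suc l)) \<notin> del_row D"
      using row young_diagram_closed[OF yd, of "Suc 1" "Suc (Suc l)" 1 "Suc (Suc l)"] by (auto simp: del_row_def)
    then have "del_row D \<in> ?S"
      using D D_eq inner[OF young_diagram_del_row[OF yd]] young_diagram_del_row[OF yd] fits_staircase_del_row
      by (simp add: row_eq_diagrams_def row_le_diagrams_def)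
    then show "D \<in> add_row (Suc l) ` ?S"
      using D_eq by (rule rev_image_eqI[OF _ sym])
  next
    fix D assume "D \<in> add_row (Suc l) ` ?S"
    then obtain D' where D: "D = add_row (Suc l) D'" "D' \<in> ?S" by blast
    then have yd: "young_diagram D'" by simp
    have "(0, j) \<notin> D'" for j
      using young_diagram_cell_pos[OF yd, of 0 j] by auto
    then show "D \<in> row_eq_diagrams n (Suc l) k"
      using D inner[OF yd] young_diagram_add_row[OF yd] fits_staircase_add_row[OF yd] assms
      by (auto simp: row_eq_diagrams_def row_le_diagrams_def mem_add_row)
  }
qed

lemma card_row_eq_diagrams:
  assumes "Suc l < n"
  shows "card (row_eq_diagrams n (Suc l) k) =
    card (row_eq_diagrams (n - 1) (Suc l) k) + card (row_le_diagrams (n - 1) l (k - of_bool (Suc (Suc l) < n)))"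
proof -
  define S where "S = {D. young_diagram D \<and> fits_staircase (n - 1) D \<and> (1, Suc (Suc l)) \<notin> D \<and>
    int (card (inner_corners (n - 1) D)) + of_bool ((1, Suc l) \<notin> D \<and> Suc (Suc l) < n) = k}"
  have "inj_on (add_row (Suc l)) S"
    by (rule inj_on_inverseI[of _ del_row]) (simp add: S_def del_row_add_row)
  then have "card (row_eq_diagrams n (Suc l) k) = card S"
    unfolding row_eq_diagrams_eq_image_add_row[OF assms] S_def by (rule card_image)
  also have "\<dots> = card (S \<inter> {D. (1, Suc l) \<in> D}) + card (S - {D. (1, Suc l) \<in> D})"
    by (rule card_Int_Diff) (rule finite_subset[OF _ finite_fits_staircase], auto simp: S_def)
  also have "S \<inter> {D. (1, Suc l) \<in> D} = row_eq_diagrams (n - 1) (Suc l) k"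
    by (auto simp: S_def row_eq_diagrams_def row_le_diagrams_def)
  also have "S - {D. (1, Suc l) \<in> D} = row_le_diagrams (n - 1) l (k - of_bool (Suc (Suc l) < n))"
    by (auto simp: S_def row_le_diagrams_def dest: young_diagram_closed[of _ 1 "Suc (Suc l)" 1 "Suc l"])
  finally show ?thesis .
qed

(* Binomial coefficient with integer arguments, zero for a negative lower index, so that
   Pascal's rule holds without side conditions. *)
definition binom :: "int \<Rightarrow> int \<Rightarrow> real" where
  "binom a r = (if r < 0 then 0 else of_int a gchoose nat r)"

lemma binom_neg [simp]: "r < 0 \<Longrightarrow> binom a r = 0"
  by (simp add: binom_def)

lemma binom_0 [simp]: "binom a 0 = 1"
  by (simp add: binom_def)

lemma binom_of_nat [simp]: "binom (int a) (int b) = real (a choose b)"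
  by (simp add: binom_def binomial_gbinomial)

lemma binom_eq_0: "0 \<le> a \<Longrightarrow> a < r \<Longrightarrow> binom a r = 0"
  using binom_of_nat[of "nat a" "nat r"] by simp

lemma binom_Pascal: "binom a r = binom (a - 1) r + binom (a - 1) (r - 1)"
proof (cases "r \<le> 0")
  case True
  then show ?thesis by (cases "r = 0") (auto simp: binom_def)
next
  case False
  then have "nat r = Suc (nat (r - 1))" by simp
  then show ?thesis
    using False gbinomial_Suc_Suc[of "of_int (a - 1) :: real" "nat (r - 1)"] by (simp add: binom_def)
qed

definition staircase_term :: "int \<Rightarrow> int \<Rightarrow> int \<Rightarrow> int \<Rightarrow> real" where
  "staircase_term a b j k = binom a k * binom b (j + k) - binom a (k - 1) * binom b (j + k + 1)"

lemma staircase_term_Pascal_upper: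
  "staircase_term a b j k = staircase_term (a - 1) b j k + staircase_term (a - 1) b (j + 1) (k - 1)"
  unfolding staircase_term_def
  using binom_Pascal[of a k] binom_Pascal[of a "k - 1"] by (simp add: algebra_simps)

lemma staircase_term_Pascal_lower:
  "staircase_term a b j k = staircase_term a (b - 1) j k + staircase_term a (b - 1) (j - 1) k"
  unfolding staircase_term_def
  using binom_Pascal[of b "j + k"] binom_Pascal[of b "j + k + 1"] by (simp add: algebra_simps)

lemma staircase_term_step:
  "staircase_term a b j k - staircase_term a (b - 1) j k =
     staircase_term (a - 1) b j k - staircase_term (a - 1) (b - 1) j k
     + staircase_term (a - 1) (b - 1) j (k - 1)"
  using staircase_term_Pascal_upper[of a b j k] staircase_term_Pascal_upper[of a "b - 1" j k]
    staircase_term_Pascal_lower[of "a - 1" b "j + 1" "k - 1"] by simp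

lemma staircase_term_diagonal: "staircase_term a (int l) (int l) k = of_bool (k = 0)"
  by (cases "k < 0") (auto simp: staircase_term_def binom_eq_0)

lemma staircase_term_beyond: "staircase_term a (int l) (int (Suc l)) k = 0"
  by (cases "k < 0") (auto simp: staircase_term_def binom_eq_0)

lemma staircase_term_minus_one: "staircase_term a a (-1) k = 0"
  by (simp add: staircase_term_def)

definition corner_formula :: "nat \<Rightarrow> nat \<Rightarrow> int \<Rightarrow> real" where
  "corner_formula n l k = (\<Sum>j\<le>l. staircase_term (int n - 2 - int j) (int l) (int j) k)"

lemma corner_formula_0: "corner_formula n 0 k = of_bool (k = 0)"
  using staircase_term_diagonal[of _ 0 k] by (simp add: corner_formula_def)

lemma corner_formula_step:
  assumes "1 \<le> l" "l + 2 \<le> n"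
  shows "corner_formula n l k - corner_formula n (l - 1) k =
    corner_formula (n - 1) l k - corner_formula (n - 1) (l - 1) k + corner_formula (n - 1) (l - 1) (k - 1)"
proof -
  obtain m where l: "l = Suc m" using assms(1) by (cases l) auto
  let ?t = "\<lambda>a b j k. staircase_term (int a - 2 - int j) (int b) (int j) k"
  have diag: "staircase_term a (int l) (int l) k = of_bool (k = 0)" for a
    by (rule staircase_term_diagonal)
  have "corner_formula n l k - corner_formula n (l - 1) k =
      of_bool (k = 0) + (\<Sum>j\<le>m. ?t n l j k - ?t n m j k)"
    using diag by (simp add: corner_formula_def l sum_subtractf)
  also have "\<dots> = of_bool (k = 0) + (\<Sum>j\<le>m. ?t (n - 1) l j k - ?t (n - 1) m j k + ?t (n - 1) m j (k - 1))"
  proof (intro arg_cong2[where f = "(+)"] refl sum.cong)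
    fix j
    have "int (n - 1) - 2 - int j = int n - 2 - int j - 1" "int m = int l - 1"
      using assms by (simp_all add: l)
    then show "?t n l j k - ?t n m j k = ?t (n - 1) l j k - ?t (n - 1) m j k + ?t (n - 1) m j (k - 1)"
      by (simp only:) (rule staircase_term_step)
  qed
  also have "\<dots> = corner_formula (n - 1) l k - corner_formula (n - 1) (l - 1) k + corner_formula (n - 1) (l - 1) (k - 1)"
    using diag by (simp add: corner_formula_def l sum_subtractf sum.distrib)
  finally show ?thesis .
qed

lemma corner_formula_last_step:
  "corner_formula (Suc (Suc p)) (Suc p) k - corner_formula (Suc (Suc p)) p k = corner_formula (Suc p) p k"
proof -
  let ?t = "\<lambda>j b i. staircase_term (int p - int j) (int b) i k"
  have "corner_formula (Suc (Suc p)) (Suc p) k = (\<Sum>j\<le>Suc p. ?t j (Suc p) (int j))"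
    by (simp add: corner_formula_def)
  also have "\<dots> = (\<Sum>j\<le>Suc p. ?t j p (int j)) + (\<Sum>j\<le>Suc p. ?t j p (int j - 1))"
    using staircase_term_Pascal_lower[of _ "int (Suc p)"] by (simp add: sum.distrib)
  also have "(\<Sum>j\<le>Suc p. ?t j p (int j)) = corner_formula (Suc (Suc p)) p k"
    using staircase_term_beyond[of _ p k, simplified] by (simp add: corner_formula_def)
  also have "(\<Sum>j\<le>Suc p. ?t j p (int j - 1)) = corner_formula (Suc p) p k"
    unfolding sum.atMost_Suc_shift using staircase_term_minus_one[of "int p" k]
    by (simp add: corner_formula_def algebra_simps)
  finally show ?thesis by simp
qed

lemma staircase_term_eq_binomial:
  assumes "1 \<le> k"
  shows "real M * staircase_term (int M - 1) (int (M + j)) (int j) (int k) =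
    real (Suc j) * real (M choose k) * real ((M + j) choose Suc (j + k))"
proof (cases M)
  case 0
  then show ?thesis using assms by simp
next
  case (Suc m)
  obtain k' where k: "k = Suc k'" using assms by (cases k) auto
  have upper: "real M * real (m choose k) = real (M - k) * real (M choose k)"
    using binomial_absorb_comp[of M k] Suc by (metis diff_Suc_1 of_nat_mult)
  have upper': "real M * real (m choose k') = real k * real (M choose k)"
    using binomial_absorption[of k' M] Suc k by (metis diff_Suc_1 of_nat_mult)
  have "(M - k) * ((M + j) choose (j + k)) = Suc (j + k) * ((M + j) choose Suc (j + k))"
    using binomial_absorb_comp[of "M + j" "j + k"] binomial_absorption[of "j + k" "M + j"] by simp
  then have lower: "real (M - k) * real ((M + j) choose (j + k)) =
      real (Suc (j + k)) * real ((M + j) choose Suc (j + k))"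
    by (metis of_nat_mult)
  have "int M - 1 = int m" "int k - 1 = int k'" "int j + int k = int (j + k)"
    "int j + int k + 1 = int (Suc (j + k))"
    using Suc k by simp_all
  then have "real M * staircase_term (int M - 1) (int (M + j)) (int j) (int k) =
      real M * real (m choose k) * real ((M + j) choose (j + k))
      - real M * real (m choose k') * real ((M + j) choose Suc (j + k))"
    unfolding staircase_term_def by (simp only: binom_of_nat) (simp add: algebra_simps)
  also have "\<dots> = real (M choose k) * (real (M - k) * real ((M + j) choose (j + k)))
      - real k * real (M choose k) * real ((M + j) choose Suc (j + k))"
    unfolding upper upper' by simp
  also have "\<dots> = real (Suc j) * real (M choose k) * real ((M + j) choose Suc (j + k))"
    unfolding lower by (simp add: k algebra_simps)
  finally show ?thesis .
qed

lemma corner_formula_unrestricted_0: "corner_formula (Suc p) p 0 = 2 ^ p"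
proof -
  have "corner_formula (Suc p) p 0 = (\<Sum>j\<le>p. real (p choose j))"
    by (simp add: corner_formula_def staircase_term_def)
  also have "\<dots> = 2 ^ p"
    using choose_row_sum[of p] by (metis of_nat_numeral of_nat_power of_nat_sum)
  finally show ?thesis .
qed

lemma corner_formula_unrestricted:
  assumes "1 \<le> k"
  shows "corner_formula n (n - 1) (int k) =
    (\<Sum>i = 1..n - 1 - k. real i / real (n - i) * real ((n - i) choose k) * real ((n - 1) choose (k + i)))"
    (is "_ = (\<Sum>i = 1..n - 1 - k. ?g i)")
proof (cases n)
  case 0
  then show ?thesis using assms by (simp add: corner_formula_0)
next
  case (Suc p)
  have "corner_formula n (n - 1) (int k) = (\<Sum>j<p. staircase_term (int p - 1 - int j) (int p) (int j) (int k))"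
    using assms staircase_term_diagonal[of _ p "int k"]
    by (simp add: corner_formula_def Suc lessThan_Suc_atMost[symmetric] algebra_simps)
  also have "\<dots> = (\<Sum>j<p. ?g (Suc j))"
  proof (rule sum.cong)
    fix j assume "j \<in> {..<p}"
    then have "int p - 1 - int j = int (p - j) - 1" "p = p - j + j" "p - j > 0" by auto
    then show "staircase_term (int p - 1 - int j) (int p) (int j) (int k) = ?g (Suc j)"
      using staircase_term_eq_binomial[OF assms, of "p - j" j] Suc
      by (simp add: field_simps add.commute)
  qed simp
  also have "\<dots> = (\<Sum>i = 1..p. ?g i)"
    by (simp add: sum.atLeast1_atMost_eq)
  also have "\<dots> = (\<Sum>i = 1..n - 1 - k. ?g i)"
    by (rule sum.mono_neutral_right) (auto simp: Suc)
  finally show ?thesis .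
qed

lemma card_row_le_diagrams:
  "l < n \<Longrightarrow> real (card (row_le_diagrams n l k)) = corner_formula n l k"
proof (induction n arbitrary: l k)
  case 0
  then show ?case by simp
next
  case (Suc p)
  note IH_n = Suc.IH
  from Suc.prems show ?case
  proof (induction l arbitrary: k)
    case 0
    then show ?case by (simp add: row_le_diagrams_0 corner_formula_0)
  next
    case (Suc l)
    have IH_l: "real (card (row_le_diagrams (Suc p) l k)) = corner_formula (Suc p) l k"
      using Suc by simp
    have rec: "card (row_le_diagrams (Suc p) (Suc l) k) =
        card (row_le_diagrams (Suc p) l k) + card (row_eq_diagrams p (Suc l) k)
        + card (row_le_diagrams p l (k - of_bool (Suc l < p)))"
      using card_row_le_diagrams_Suc card_row_eq_diagrams[of l "Suc p" k] Suc.prems by simp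
    show ?case
    proof (cases "Suc l < p")
      case True
      have "card (row_le_diagrams p (Suc l) k) = card (row_le_diagrams p l k) + card (row_eq_diagrams p (Suc l) k)"
        by (rule card_row_le_diagrams_Suc)
      then show ?thesis
        using rec IH_l IH_n[of "Suc l" k] IH_n[of l k] IH_n[of l "k - 1"] True
          corner_formula_step[of "Suc l" "Suc p" k]
        by simp
    next
      case False
      then have p: "p = Suc l"
        using Suc.prems by simp
      then show ?thesis
        using rec IH_l IH_n[of l k] row_eq_diagrams_empty[of p "Suc l" k] corner_formula_last_step[of l k]
        by simp
    qed
  qed
qed

lemma c_count_eq_card_row_le_diagrams: "c_count n k = card (row_le_diagrams n (n - 1) (int k))"
  unfolding c_count_def row_le_diagrams_def by (metis fits_staircase_first_row of_nat_eq_iff)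

lemma no_inner_corners_eq_row_le_diagrams:
  "{D. young_diagram D \<and> fits_staircase n D \<and> inner_corners n D = {}} = row_le_diagrams n (n - 1) 0"
  using fits_staircase_first_row finite_inner_corners by (auto simp: row_le_diagrams_def)

theorem proposition2p9:
  fixes n k :: nat
  assumes "n \<ge> 2" and "k \<ge> 1"
  shows "real (c_count n k) =
           (\<Sum>i = 1..n - 1 - k. real i / real (n - i) * real ((n - i) choose k) * real ((n - 1) choose (k + i))) \<and>
         card {D. young_diagram D \<and> fits_staircase n D \<and> inner_corners n D = {}} = 2 ^ (n - 1)"
proof
  obtain p where n: "n = Suc p"
    using assms(1) by (cases n) auto
  have count: "real (card (row_le_diagrams n (n - 1) k')) = corner_formula n (n - 1) k'" for k'
    using n by (simp add: card_row_le_diagrams)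
  show "real (c_count n k) =
      (\<Sum>i = 1..n - 1 - k. real i / real (n - i) * real ((n - i) choose k) * real ((n - 1) choose (k + i)))"
    using count corner_formula_unrestricted[OF assms(2)] by (simp add: c_count_eq_card_row_le_diagrams)
  have "real (card {D. young_diagram D \<and> fits_staircase n D \<and> inner_corners n D = {}}) = 2 ^ (n - 1)"
    using count[of 0] corner_formula_unrestricted_0[of p] n by (simp add: no_inner_corners_eq_row_le_diagrams)
  then show "card {D. young_diagram D \<and> fits_staircase n D \<and> inner_corners n D = {}} = 2 ^ (n - 1)"
    by (metis of_nat_eq_of_nat_power_cancel_iff of_nat_numeral)
qed

end
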